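(* Consider the hypercube-based interactive proof of knowledge for the Rank Syndrome Decoding relation described in the context. If the prover knows $\mathbf{x}\in\mathbb{F}_{q^m}^n$ with $\mathbf{H}\mathbf{x}=\mathbf{y}$ and $W_R(\mathbf{x})\le r$ and executes the protocol correctly, then the verifier accepts with probability $1$ (the protocol is perfectly complete).
   Context: Let $q$ be a prime power, $m,n,k,r,\eta$ positive integers, $\mathbb{F}_{q^m}$ the field with $q^m$ elements and $\mathbb{F}_{q^{m\eta}}$ its degree-$\eta$ extension. For $\mathbf{x}=(x_1,\dots,x_n)\in\mathbb{F}_{q^m}^n$, its rank weight $W_R(\mathbf{x})$ is the dimension of the $\mathbb{F}_q$-span $U=\langle x_1,\dots,x_n\rangle$. A Rank-SD instance is $\mathbf{H}=(\mathbf{I}_{n-k}\,\|\,\mathbf{H}')\in\mathbb{F}_{q^m}^{(n-k)\times n}$, $\mathbf{y}\in\mathbb{F}_{q^m}^{n-k}$; a witness is $\mathbf{x}$ with $\mathbf{H}\mathbf{x}=\mathbf{y}$ and $W_R(\mathbf{x})\le r$. Writing $\mathbf{x}=(\mathbf{x}_A\|\mathbf{x}_B)$ with $\mathbf{x}_A\in\mathbb{F}_{q^m}^{n-k}$, one has $\mathbf{x}_A=\mathbf{y}-\mathbf{H}'\mathbf{x}_B$. Assuming $1\in U$ and $\dim U=r$, the annihilator polynomial $L(X)=\prod_{u\in U}(X-u)$ can be written $L(X)=(X^{q^r}-X)+\sum_{i=1}^{r-1}\beta_i(X^{q^i}-X)$, $\boldsymbol\beta=(\beta_1,\dots,\beta_{r-1})$.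 MPC protocol $\Pi^\eta$ (on linear sharings $[\![\cdot]\!]$): inputs are sharings of $\mathbf{x}_B$, $\boldsymbol\beta$, a uniformly random $\mathbf{a}\in\mathbb{F}_{q^{m\eta}}^{r-1}$ and $c=-\langle\boldsymbol\beta,\mathbf{a}\rangle$. Given public random $\gamma_1,\dots,\gamma_n,\varepsilon\in\mathbb{F}_{q^{m\eta}}$, parties compute $[\![\mathbf{x}_A]\!]=\mathbf{y}-\mathbf{H}'[\![\mathbf{x}_B]\!]$, $[\![z]\!]=-\sum_j\gamma_j([\![x_j]\!]^{q^r}-[\![x_j]\!])$, $[\![\omega_i]\!]=\sum_j\gamma_j([\![x_j]\!]^{q^i}-[\![x_j]\!])$ for $1\le i\le r-1$, open $\boldsymbol\alpha=\varepsilon\boldsymbol\omega+\mathbf{a}$, compute and open $v=\varepsilon z-\langle\boldsymbol\alpha,\boldsymbol\beta\rangle-c$, and accept iff $v=0$. Hypercube protocol: $N=2^D$ leaf parties indexed by $(i_1,\dots,i_D)\in\{1,2\}^D$. The prover additively shares $\mathbf{x}_B,\boldsymbol\beta,\mathbf{a},c$ among the leaves (leaf shares derived from seeds of a GGM tree, the last leaf's shares of $\mathbf{x}_B,\boldsymbol\beta,c$ being corrected so the sums are correct), commits each leaf state with a commitment scheme, and sends $h_0$, a hash of all leaf commitments. The verifier sends $((\gamma_j)_j,\varepsilon)$ uniform in $\mathbb{F}_{q^{m\eta}}^{n+1}$. For each dimension $d\in\{1,\dots,D\}$, the two main parties $(d,1),(d,2)$ hold the sums of the leaf shares with $i_d=1$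 (resp. $2$); the prover runs $\Pi^\eta$ on them, obtaining shares of $\boldsymbol\alpha$ and $v$, sets $H_d$ = hash of these shares, and sends $h_1=\mathrm{Hash}(H_1,\dots,H_D)$. The verifier sends $i^*$ uniform in $\{1,\dots,N\}$. The prover reveals the states of all leaves except $i^*$ (via GGM sibling path and, if $i^*\ne N$, the correction shares of leaf $N$), the commitment of leaf $i^*$, and the share of $\boldsymbol\alpha$ of leaf $i^*$. The verifier recomputes $h_0$, recomputes each dimension's execution (setting the share of the main party containing $i^*$ so that $v=0$), and accepts iff $\boldsymbol\alpha$ is the same for all $D$ executions and the recomputed $h_0,h_1$ match. *)

theory Defs
  imports "HOL-Computational_Algebra.Polynomial"
begin

section \<open>Finite-field notions (everything lives inside the big field 'k = F_{q^(m eta)})\<close>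

text \<open>Subfield F_{q^e} of 'k, as the set of fixed points of x \<mapsto> x^(q^e).\<close>
definition subfield_of :: "nat \<Rightarrow> ('k::field) set" where
  "subfield_of Q = {a. a ^ Q = a}"

definition fq_span :: "nat \<Rightarrow> ('k::field) set \<Rightarrow> 'k set" where
  "fq_span q S = {v. \<exists>T c. finite T \<and> T \<subseteq> S \<and> (\<forall>t\<in>T. c t \<in> subfield_of q)
                        \<and> v = (\<Sum>t\<in>T. c t * t)}"

definition fq_independent :: "nat \<Rightarrow> ('k::field) set \<Rightarrow> bool" where
  "fq_independent q B \<longleftrightarrow> (\<forall>T c. finite T \<and> T \<subseteq> B \<and> (\<forall>t\<in>T. c t \<in> subfield_of q)
        \<and> (\<Sum>t\<in>T. c t * t) = 0 \<longrightarrow> (\<forall>t\<in>T. c t = 0))"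

definition fq_dim :: "nat \<Rightarrow> ('k::field) set \<Rightarrow> nat" where
  "fq_dim q V = card (SOME B. B \<subseteq> V \<and> fq_independent q B \<and> fq_span q B = V)"

definition rank_weight :: "nat \<Rightarrow> nat \<Rightarrow> (nat \<Rightarrow> 'k::field) \<Rightarrow> nat" where
  "rank_weight q n x = fq_dim q (fq_span q (x ` {..<n}))"

text \<open>Public data: H = (I_{n-k} | H'), H' given entrywise (rows i<n-k, columns j<k), y.\<close>
record 'k pub =
  qq :: nat
  rr :: nat
  nn :: nat
  kk :: nat
  Hp :: "nat \<Rightarrow> nat \<Rightarrow> 'k"
  yv :: "nat \<Rightarrow> 'k"

text \<open>Additive share held by a (leaf or main) party: shares of x_B (indices <k),
  beta (indices 1..r-1), a (indices 1..r-1) and c.\<close>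
record 'k shr =
  sxb :: "nat \<Rightarrow> 'k"
  sbt :: "nat \<Rightarrow> 'k"
  sa  :: "nat \<Rightarrow> 'k"
  sc  :: "'k"

definition shr_sum :: "nat set \<Rightarrow> (nat \<Rightarrow> ('k::comm_monoid_add) shr) \<Rightarrow> 'k shr" where
  "shr_sum S f = \<lparr>sxb = (\<lambda>j. \<Sum>i\<in>S. sxb (f i) j), sbt = (\<lambda>j. \<Sum>i\<in>S. sbt (f i) j),
                   sa = (\<lambda>j. \<Sum>i\<in>S. sa (f i) j), sc = (\<Sum>i\<in>S. sc (f i))\<rparr>"

text \<open>Local computations of one party. The flag \<open>lead\<close> says whether this party adds the
  public constants (y) of the affine maps.\<close>
definition xA_sh :: "'k::field pub \<Rightarrow> bool \<Rightarrow> 'k shr \<Rightarrow> nat \<Rightarrow> 'k" where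
  "xA_sh P lead s i = (if lead then yv P i else 0) - (\<Sum>j<kk P. Hp P i j * sxb s j)"

definition x_sh :: "'k::field pub \<Rightarrow> bool \<Rightarrow> 'k shr \<Rightarrow> nat \<Rightarrow> 'k" where
  "x_sh P lead s j = (if j < nn P - kk P then xA_sh P lead s j else sxb s (j - (nn P - kk P)))"

definition z_sh :: "'k::field pub \<Rightarrow> (nat \<Rightarrow> 'k) \<Rightarrow> bool \<Rightarrow> 'k shr \<Rightarrow> 'k" where
  "z_sh P gam lead s =
     - (\<Sum>j<nn P. gam j * (x_sh P lead s j ^ (qq P ^ rr P) - x_sh P lead s j))"

definition omega_sh :: "'k::field pub \<Rightarrow> (nat \<Rightarrow> 'k) \<Rightarrow> bool \<Rightarrow> 'k shr \<Rightarrow> nat \<Rightarrow> 'k" where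
  "omega_sh P gam lead s i =
     (\<Sum>j<nn P. gam j * (x_sh P lead s j ^ (qq P ^ i) - x_sh P lead s j))"

definition alpha_sh :: "'k::field pub \<Rightarrow> (nat \<Rightarrow> 'k) \<Rightarrow> 'k \<Rightarrow> bool \<Rightarrow> 'k shr \<Rightarrow> nat \<Rightarrow> 'k" where
  "alpha_sh P gam eps lead s i = eps * omega_sh P gam lead s i + sa s i"

definition v_sh :: "'k::field pub \<Rightarrow> (nat \<Rightarrow> 'k) \<Rightarrow> 'k \<Rightarrow> (nat \<Rightarrow> 'k) \<Rightarrow> bool \<Rightarrow> 'k shr \<Rightarrow> 'k" where
  "v_sh P gam eps alpha lead s =
     eps * z_sh P gam lead s - (\<Sum>i\<in>{1..<rr P}. alpha i * sbt s i) - sc s"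

text \<open>Leaves are indexed 0..<N, N = 2^D; leaf i corresponds to (i_1,...,i_D) with
  i_d = bit (d-1) of i plus 1. Leaf 0 = (1,...,1) carries the public constants,
  leaf N-1 = (2,...,2) is the corrected leaf.\<close>
definition bit_of :: "nat \<Rightarrow> nat \<Rightarrow> nat" where
  "bit_of d i = (i div 2 ^ d) mod 2"

record ('sd, 'k, 'cm, 'h, 'h1) prims =
  prg :: "'sd \<Rightarrow> 'sd \<times> 'sd"
  expand :: "'sd \<Rightarrow> 'k shr"
  com :: "'sd \<times> 'k shr option \<Rightarrow> 'cm"
  hash0 :: "'cm list \<Rightarrow> 'h"
  hashd :: "'k list \<times> 'k list \<times> 'k \<times> 'k \<Rightarrow> 'h1"
  hash1 :: "'h1 list \<Rightarrow> 'h"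

fun ggm :: "('sd \<Rightarrow> 'sd \<times> 'sd) \<Rightarrow> 'sd \<Rightarrow> nat \<Rightarrow> nat \<Rightarrow> 'sd" where
  "ggm G s 0 j = s"
| "ggm G s (Suc l) j = (if even j then fst else snd) (G (ggm G s l (j div 2)))"

definition sibling :: "nat \<Rightarrow> nat" where
  "sibling j = (if even j then j + 1 else j - 1)"

text \<open>Leaf state = (seed, correction); only the last leaf has a correction, which
  replaces its x_B-, beta- and c-shares.\<close>
definition leaf_sh :: "('sd \<Rightarrow> 'k shr) \<Rightarrow> 'sd \<times> 'k shr option \<Rightarrow> 'k shr" where
  "leaf_sh E st = (case snd st of None \<Rightarrow> E (fst st)
     | Some cr \<Rightarrow> (E (fst st))\<lparr>sxb := sxb cr, sbt := sbt cr, sc := sc cr\<rparr>)"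

definition pr_seed :: "('sd,'k,'cm,'h,'h1) prims \<Rightarrow> nat \<Rightarrow> 'sd \<Rightarrow> nat \<Rightarrow> 'sd" where
  "pr_seed Pr D sd0 i = ggm (prg Pr) sd0 D i"

definition pr_a :: "('sd,'k::field,'cm,'h,'h1) prims \<Rightarrow> nat \<Rightarrow> 'sd \<Rightarrow> nat \<Rightarrow> 'k" where
  "pr_a Pr D sd0 i = (\<Sum>l<2^D. sa (expand Pr (pr_seed Pr D sd0 l)) i)"

definition pr_c :: "'k::field pub \<Rightarrow> ('sd,'k,'cm,'h,'h1) prims \<Rightarrow> nat \<Rightarrow> 'sd \<Rightarrow> (nat \<Rightarrow> 'k) \<Rightarrow> 'k" where
  "pr_c P Pr D sd0 beta = - (\<Sum>i\<in>{1..<rr P}. beta i * pr_a Pr D sd0 i)"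

text \<open>Correction for the last leaf: makes the sums of the shares equal x_B, beta, c.\<close>
definition pr_aux :: "'k::field pub \<Rightarrow> ('sd,'k,'cm,'h,'h1) prims \<Rightarrow> nat \<Rightarrow> 'sd
     \<Rightarrow> (nat \<Rightarrow> 'k) \<Rightarrow> (nat \<Rightarrow> 'k) \<Rightarrow> 'k shr" where
  "pr_aux P Pr D sd0 x beta =
     \<lparr>sxb = (\<lambda>j. x (nn P - kk P + j) - (\<Sum>l<2^D - 1. sxb (expand Pr (pr_seed Pr D sd0 l)) j)),
      sbt = (\<lambda>i. beta i - (\<Sum>l<2^D - 1. sbt (expand Pr (pr_seed Pr D sd0 l)) i)),
      sa = (\<lambda>_. 0),
      sc = pr_c P Pr D sd0 beta - (\<Sum>l<2^D - 1. sc (expand Pr (pr_seed Pr D sd0 l)))\<rparr>"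

definition pr_state :: "'k::field pub \<Rightarrow> ('sd,'k,'cm,'h,'h1) prims \<Rightarrow> nat \<Rightarrow> 'sd
     \<Rightarrow> (nat \<Rightarrow> 'k) \<Rightarrow> (nat \<Rightarrow> 'k) \<Rightarrow> nat \<Rightarrow> 'sd \<times> 'k shr option" where
  "pr_state P Pr D sd0 x beta i =
     (pr_seed Pr D sd0 i, if i = 2^D - 1 then Some (pr_aux P Pr D sd0 x beta) else None)"

definition pr_leaf :: "'k::field pub \<Rightarrow> ('sd,'k,'cm,'h,'h1) prims \<Rightarrow> nat \<Rightarrow> 'sd
     \<Rightarrow> (nat \<Rightarrow> 'k) \<Rightarrow> (nat \<Rightarrow> 'k) \<Rightarrow> nat \<Rightarrow> 'k shr" where
  "pr_leaf P Pr D sd0 x beta i = leaf_sh (expand Pr) (pr_state P Pr D sd0 x beta i)"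

definition pr_h0 :: "'k::field pub \<Rightarrow> ('sd,'k,'cm,'h,'h1) prims \<Rightarrow> nat \<Rightarrow> 'sd
     \<Rightarrow> (nat \<Rightarrow> 'k) \<Rightarrow> (nat \<Rightarrow> 'k) \<Rightarrow> 'h" where
  "pr_h0 P Pr D sd0 x beta =
     hash0 Pr (map (\<lambda>i. com Pr (pr_state P Pr D sd0 x beta i)) [0..<2^D])"

text \<open>Share of main party (d,b) (b = 0 stands for index 1, b = 1 for index 2).\<close>
definition pr_main :: "'k::field pub \<Rightarrow> ('sd,'k,'cm,'h,'h1) prims \<Rightarrow> nat \<Rightarrow> 'sd
     \<Rightarrow> (nat \<Rightarrow> 'k) \<Rightarrow> (nat \<Rightarrow> 'k) \<Rightarrow> nat \<Rightarrow> nat \<Rightarrow> 'k shr" where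
  "pr_main P Pr D sd0 x beta d b =
     shr_sum {i. i < 2^D \<and> bit_of d i = b} (pr_leaf P Pr D sd0 x beta)"

definition pr_Hd :: "'k::field pub \<Rightarrow> ('sd,'k,'cm,'h,'h1) prims \<Rightarrow> nat \<Rightarrow> 'sd
     \<Rightarrow> (nat \<Rightarrow> 'k) \<Rightarrow> (nat \<Rightarrow> 'k) \<Rightarrow> (nat \<Rightarrow> 'k) \<Rightarrow> 'k \<Rightarrow> nat \<Rightarrow> 'h1" where
  "pr_Hd P Pr D sd0 x beta gam eps d =
     (let s0 = pr_main P Pr D sd0 x beta d 0; s1 = pr_main P Pr D sd0 x beta d 1;
          a0 = alpha_sh P gam eps True s0; a1 = alpha_sh P gam eps False s1;
          al = (\<lambda>i. a0 i + a1 i);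
          v0 = v_sh P gam eps al True s0; v1 = v_sh P gam eps al False s1
      in hashd Pr (map a0 [1..<rr P], map a1 [1..<rr P], v0, v1))"

definition pr_h1 :: "'k::field pub \<Rightarrow> ('sd,'k,'cm,'h,'h1) prims \<Rightarrow> nat \<Rightarrow> 'sd
     \<Rightarrow> (nat \<Rightarrow> 'k) \<Rightarrow> (nat \<Rightarrow> 'k) \<Rightarrow> (nat \<Rightarrow> 'k) \<Rightarrow> 'k \<Rightarrow> 'h" where
  "pr_h1 P Pr D sd0 x beta gam eps =
     hash1 Pr (map (pr_Hd P Pr D sd0 x beta gam eps) [0..<D])"

text \<open>Response to i*: sibling path (seed at depth l, for l = 1..D), correction of the
  last leaf (if i* is not the last leaf), commitment of leaf i*, alpha-share of leaf i*.\<close>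
record ('sd, 'k, 'cm) resp =
  rpath :: "nat \<Rightarrow> 'sd"
  raux :: "'k shr option"
  rcom :: 'cm
  ralpha :: "nat \<Rightarrow> 'k"

definition pr_resp :: "'k::field pub \<Rightarrow> ('sd,'k,'cm,'h,'h1) prims \<Rightarrow> nat \<Rightarrow> 'sd
     \<Rightarrow> (nat \<Rightarrow> 'k) \<Rightarrow> (nat \<Rightarrow> 'k) \<Rightarrow> (nat \<Rightarrow> 'k) \<Rightarrow> 'k \<Rightarrow> nat \<Rightarrow> ('sd,'k,'cm) resp" where
  "pr_resp P Pr D sd0 x beta gam eps ist =
     \<lparr>rpath = (\<lambda>l. ggm (prg Pr) sd0 l (sibling (ist div 2 ^ (D - l)))),
      raux = (if ist \<noteq> 2^D - 1 then Some (pr_aux P Pr D sd0 x beta) else None),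
      rcom = com Pr (pr_state P Pr D sd0 x beta ist),
      ralpha = alpha_sh P gam eps (ist = 0) (pr_leaf P Pr D sd0 x beta ist)\<rparr>"

definition vf_seed :: "('sd,'k,'cm,'h,'h1) prims \<Rightarrow> nat \<Rightarrow> nat \<Rightarrow> ('sd,'k,'cm) resp \<Rightarrow> nat \<Rightarrow> 'sd" where
  "vf_seed Pr D ist R i =
     (let l = (LEAST l. 1 \<le> l \<and> i div 2 ^ (D - l) \<noteq> ist div 2 ^ (D - l))
      in ggm (prg Pr) (rpath R l) (D - l) (i mod 2 ^ (D - l)))"

definition vf_state :: "('sd,'k,'cm,'h,'h1) prims \<Rightarrow> nat \<Rightarrow> nat \<Rightarrow> ('sd,'k,'cm) resp
     \<Rightarrow> nat \<Rightarrow> 'sd \<times> 'k shr option" where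
  "vf_state Pr D ist R i = (vf_seed Pr D ist R i, if i = 2^D - 1 then raux R else None)"

definition vf_leaf :: "('sd,'k,'cm,'h,'h1) prims \<Rightarrow> nat \<Rightarrow> nat \<Rightarrow> ('sd,'k,'cm) resp
     \<Rightarrow> nat \<Rightarrow> 'k shr" where
  "vf_leaf Pr D ist R i = leaf_sh (expand Pr) (vf_state Pr D ist R i)"

definition vf_h0 :: "('sd,'k,'cm,'h,'h1) prims \<Rightarrow> nat \<Rightarrow> nat \<Rightarrow> ('sd,'k,'cm) resp \<Rightarrow> 'h" where
  "vf_h0 Pr D ist R =
     hash0 Pr (map (\<lambda>i. if i = ist then rcom R else com Pr (vf_state Pr D ist R i)) [0..<2^D])"

definition vf_alpha_parts :: "'k::field pub \<Rightarrow> ('sd,'k,'cm,'h,'h1) prims \<Rightarrow> nat \<Rightarrow> (nat \<Rightarrow> 'k) \<Rightarrow> 'k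
     \<Rightarrow> nat \<Rightarrow> ('sd,'k,'cm) resp \<Rightarrow> nat \<Rightarrow> nat \<Rightarrow> nat \<Rightarrow> 'k" where
  "vf_alpha_parts P Pr D gam eps ist R d b =
     (if b = bit_of d ist then
        (\<lambda>j. (\<Sum>i\<in>{i. i < 2^D \<and> bit_of d i = b \<and> i \<noteq> ist}.
                 alpha_sh P gam eps (i = 0) (vf_leaf Pr D ist R i) j) + ralpha R j)
      else alpha_sh P gam eps (b = 0) (shr_sum {i. i < 2^D \<and> bit_of d i = b} (vf_leaf Pr D ist R)))"

definition vf_alpha :: "'k::field pub \<Rightarrow> ('sd,'k,'cm,'h,'h1) prims \<Rightarrow> nat \<Rightarrow> (nat \<Rightarrow> 'k) \<Rightarrow> 'k
     \<Rightarrow> nat \<Rightarrow> ('sd,'k,'cm) resp \<Rightarrow> nat \<Rightarrow> nat \<Rightarrow> 'k" where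
  "vf_alpha P Pr D gam eps ist R d =
     (\<lambda>j. vf_alpha_parts P Pr D gam eps ist R d 0 j + vf_alpha_parts P Pr D gam eps ist R d 1 j)"

text \<open>Recomputed H_d: v-share of the other main party is computed, the v-share of the
  main party containing i* is set such that v = 0.\<close>
definition vf_Hd :: "'k::field pub \<Rightarrow> ('sd,'k,'cm,'h,'h1) prims \<Rightarrow> nat \<Rightarrow> (nat \<Rightarrow> 'k) \<Rightarrow> 'k
     \<Rightarrow> nat \<Rightarrow> ('sd,'k,'cm) resp \<Rightarrow> nat \<Rightarrow> 'h1" where
  "vf_Hd P Pr D gam eps ist R d =
     (let bs = bit_of d ist; bo = 1 - bs;
          al = vf_alpha P Pr D gam eps ist R d;
          vo = v_sh P gam eps al (bo = 0) (shr_sum {i. i < 2^D \<and> bit_of d i = bo} (vf_leaf Pr D ist R));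
          vs = - vo;
          v0 = (if bs = 0 then vs else vo); v1 = (if bs = 0 then vo else vs)
      in hashd Pr (map (vf_alpha_parts P Pr D gam eps ist R d 0) [1..<rr P],
                   map (vf_alpha_parts P Pr D gam eps ist R d 1) [1..<rr P], v0, v1))"

definition verifier_accepts :: "'k::field pub \<Rightarrow> ('sd,'k,'cm,'h,'h1) prims \<Rightarrow> nat
     \<Rightarrow> 'h \<Rightarrow> (nat \<Rightarrow> 'k) \<Rightarrow> 'k \<Rightarrow> 'h \<Rightarrow> nat \<Rightarrow> ('sd,'k,'cm) resp \<Rightarrow> bool" where
  "verifier_accepts P Pr D h0 gam eps h1 ist R \<longleftrightarrow>
     vf_h0 Pr D ist R = h0
     \<and> (\<forall>d<D. map (vf_alpha P Pr D gam eps ist R d) [1..<rr P]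
               = map (vf_alpha P Pr D gam eps ist R 0) [1..<rr P])
     \<and> hash1 Pr (map (vf_Hd P Pr D gam eps ist R) [0..<D]) = h1"

text \<open>Outcome of an honest execution with prover randomness \<open>sd0\<close> (sd0 seed of the GGM
  tree, from which all leaf shares and a are derived) and verifier challenges
  (gam, eps) and i*.\<close>
definition honest_accepts :: "'k::field pub \<Rightarrow> ('sd,'k,'cm,'h,'h1) prims \<Rightarrow> nat
     \<Rightarrow> (nat \<Rightarrow> 'k) \<Rightarrow> (nat \<Rightarrow> 'k) \<Rightarrow> 'sd \<Rightarrow> (nat \<Rightarrow> 'k) \<Rightarrow> 'k \<Rightarrow> nat \<Rightarrow> bool" where
  "honest_accepts P Pr D x beta sd0 gam eps ist =
     verifier_accepts P Pr D (pr_h0 P Pr D sd0 x beta) gam eps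
        (pr_h1 P Pr D sd0 x beta gam eps) ist (pr_resp P Pr D sd0 x beta gam eps ist)"

end

theory Submission
  imports Defs "HOL-Computational_Algebra.Primes"
begin

(* The honest leaf shares add up to (x_B, beta, a, c) with c = -<beta, a>, and every local
   computation of Pi^eta is additive in the shares, since x ^ (q ^ i) is additive in
   characteristic p.  Hence in every dimension the two main parties open the alpha and v of the
   total share, and v = - eps * sum_j gamma_j L(x_j) = 0 because each x_j lies in U, the root set
   of L.  The verifier recomputes every leaf except i* from the GGM sibling path and reads the
   alpha-share of i* off the response, so its h_0, alpha and H_d are the prover's; in particular
   the v-share it sets for the main party containing i* is the prover's, as the two v-shares add
   up to 0. *)

(* The flag passed to F says whether the group of parties contains leaf 0, the party that adds
   the public constants. *)
definition share_linear :: "(bool \<Rightarrow> 'a::comm_monoid_add shr \<Rightarrow> 'b::comm_monoid_add) \<Rightarrow> bool" where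
  "share_linear F \<longleftrightarrow>
     (\<forall>S f. finite S \<longrightarrow> F (0 \<in> S) (shr_sum S f) = (\<Sum>l\<in>S. F (l = 0) (f l)))"

lemma share_linearI:
  "(\<And>S f. finite S \<Longrightarrow> F (0 \<in> S) (shr_sum S f) = (\<Sum>l\<in>S. F (l = 0) (f l))) \<Longrightarrow> share_linear F"
  unfolding share_linear_def by blast

lemma share_linearD:
  "share_linear F \<Longrightarrow> finite S \<Longrightarrow> F (0 \<in> S) (shr_sum S f) = (\<Sum>l\<in>S. F (l = 0) (f l))"
  unfolding share_linear_def by blast

lemma share_linear_lead_const: "share_linear (\<lambda>lead _. if lead then c else 0)"
  by (rule share_linearI) (simp add: sum.delta)

lemma share_linear_sxb: "share_linear (\<lambda>_ s. sxb s j)"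
  and share_linear_sbt: "share_linear (\<lambda>_ s. sbt s j)"
  and share_linear_sa: "share_linear (\<lambda>_ s. sa s j)"
  and share_linear_sc: "share_linear (\<lambda>_ s. sc s)"
  by (auto intro: share_linearI simp: shr_sum_def)

lemma share_linear_add:
  "share_linear F \<Longrightarrow> share_linear G \<Longrightarrow> share_linear (\<lambda>lead s. F lead s + G lead s)"
  by (rule share_linearI) (simp add: share_linearD sum.distrib)

lemma share_linear_diff:
  fixes F G :: "bool \<Rightarrow> 'a::comm_monoid_add shr \<Rightarrow> 'b::ab_group_add"
  shows "share_linear F \<Longrightarrow> share_linear G \<Longrightarrow> share_linear (\<lambda>lead s. F lead s - G lead s)"
  by (rule share_linearI) (simp add: share_linearD sum_subtractf)

lemma share_linear_uminus:
  fixes F :: "bool \<Rightarrow> 'a::comm_monoid_add shr \<Rightarrow> 'b::ab_group_add"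
  shows "share_linear F \<Longrightarrow> share_linear (\<lambda>lead s. - F lead s)"
  by (rule share_linearI) (simp add: share_linearD sum_negf)

lemma share_linear_mult_left:
  fixes F :: "bool \<Rightarrow> 'a::comm_monoid_add shr \<Rightarrow> 'b::semiring_0"
  shows "share_linear F \<Longrightarrow> share_linear (\<lambda>lead s. c * F lead s)"
  by (rule share_linearI) (simp add: share_linearD sum_distrib_left)

lemma share_linear_sum:
  "finite I \<Longrightarrow> (\<And>i. i \<in> I \<Longrightarrow> share_linear (F i)) \<Longrightarrow> share_linear (\<lambda>lead s. \<Sum>i\<in>I. F i lead s)"
  by (rule share_linearI) (simp add: share_linearD sum.swap[of _ I])

lemma share_linear_power_CHAR:
  fixes F :: "bool \<Rightarrow> 'a::comm_monoid_add shr \<Rightarrow> 'b::comm_semiring_1"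
  assumes "prime CHAR('b)" and "Q = CHAR('b) ^ n" and "share_linear F"
  shows "share_linear (\<lambda>lead s. F lead s ^ Q)"
  using assms by (intro share_linearI) (simp add: share_linearD freshmans_dream_sum')

lemma shr_sum_cong: "(\<And>i. i \<in> A \<Longrightarrow> f i = g i) \<Longrightarrow> shr_sum A f = shr_sum A g"
  unfolding shr_sum_def by (simp cong: sum.cong)

lemma share_linear_main_parties:
  assumes "share_linear F"
  shows "F True (shr_sum {i. i < 2 ^ D \<and> bit_of d i = 0} f)
           + F False (shr_sum {i. i < 2 ^ D \<and> bit_of d i = 1} f)
         = F True (shr_sum {..<2 ^ D} f)"
proof -
  let ?A = "{i. i < 2 ^ D \<and> bit_of d i = 0}" and ?B = "{i. i < 2 ^ D \<and> bit_of d i = 1}"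
  have "0 \<in> ?A" "0 \<notin> ?B"
    by (simp_all add: bit_of_def)
  moreover have "?A \<union> ?B = {..<2 ^ D}"
    by (auto simp: bit_of_def)
  moreover have "?A \<inter> ?B = {}"
    by auto
  ultimately show ?thesis
    using share_linearD[OF assms, of ?A f] share_linearD[OF assms, of ?B f]
      share_linearD[OF assms, of "{..<2 ^ D}" f]
      sum.union_disjoint[of ?A ?B "\<lambda>l. F (l = 0) (f l)"]
    by simp
qed

lemma share_linear_x_sh: "share_linear (\<lambda>lead s. x_sh P lead s j)"
proof (cases "j < nn P - kk P")
  case True
  then show ?thesis
    unfolding x_sh_def xA_sh_def
    by (simp, intro share_linear_diff share_linear_lead_const share_linear_sum
        share_linear_mult_left share_linear_sxb) auto
qed (simp add: x_sh_def share_linear_sxb)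

lemma ggm_add: "ggm G s (a + b) j = ggm G (ggm G s a (j div 2 ^ b)) b (j mod 2 ^ b)"
proof (induction b arbitrary: j)
  case (Suc b)
  have "j div 2 div 2 ^ b = j div 2 ^ Suc b"
    by (simp add: div_mult2_eq)
  moreover have "j mod 2 ^ Suc b div 2 = j div 2 mod 2 ^ b"
    by (simp add: mod_mult2_eq)
  moreover have "even (j mod 2 ^ Suc b) = even j"
    using dvd_mod_iff[of 2 "2 * 2 ^ b" j] by simp
  ultimately show ?case
    using Suc.IH[of "j div 2"] by simp
qed simp

lemma sibling_eqI: "u \<noteq> v \<Longrightarrow> u div 2 = v div 2 \<Longrightarrow> u = sibling v"
  unfolding sibling_def by presburger

(* l is the depth at which the GGM paths to the leaves i and j split; the sibling path revealed
   for j contains the seed of the node i div 2 ^ (D - l) at that depth. *)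
lemma first_divergence_level:
  fixes i j D :: nat
  assumes "i < 2 ^ D" "j < 2 ^ D" "i \<noteq> j"
  defines "l \<equiv> LEAST l. 1 \<le> l \<and> i div 2 ^ (D - l) \<noteq> j div 2 ^ (D - l)"
  shows "1 \<le> l" "l \<le> D" "i div 2 ^ (D - l) = sibling (j div 2 ^ (D - l))"
proof -
  let ?Div = "\<lambda>l. 1 \<le> l \<and> i div 2 ^ (D - l) \<noteq> j div 2 ^ (D - l)"
  have "?Div D"
    using assms(1-3) by (cases D) auto
  then have l: "?Div l" and "l \<le> D"
    unfolding l_def by (rule LeastI, rule Least_le)
  then show "1 \<le> l" "l \<le> D" by simp_all
  have "i div 2 ^ Suc (D - l) = j div 2 ^ Suc (D - l)"
  proof (cases "l = 1")
    case True
    then show ?thesis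
      using assms(1,2) \<open>l \<le> D\<close> by (simp add: div_less)
  next
    case False
    then have "\<not> ?Div (l - 1)"
      unfolding l_def using l by (intro not_less_Least) (auto simp: l_def)
    moreover have "D - (l - 1) = Suc (D - l)"
      using False l \<open>l \<le> D\<close> by auto
    ultimately show ?thesis
      using False l by auto
  qed
  then have "i div 2 ^ (D - l) div 2 = j div 2 ^ (D - l) div 2"
    by (simp only: power_Suc2 div_mult2_eq)
  then show "i div 2 ^ (D - l) = sibling (j div 2 ^ (D - l))"
    using l by (intro sibling_eqI) auto
qed

lemma vf_seed_pr_resp:
  assumes "i < 2 ^ D" "ist < 2 ^ D" "i \<noteq> ist"
  shows "vf_seed Pr D ist (pr_resp P Pr D sd0 x beta gam eps ist) i = pr_seed Pr D sd0 i"
proof -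
  define l where "l = (LEAST l. 1 \<le> l \<and> i div 2 ^ (D - l) \<noteq> ist div 2 ^ (D - l))"
  note level = first_divergence_level[OF assms, folded l_def]
  have "vf_seed Pr D ist (pr_resp P Pr D sd0 x beta gam eps ist) i
      = ggm (prg Pr) (ggm (prg Pr) sd0 l (i div 2 ^ (D - l))) (D - l) (i mod 2 ^ (D - l))"
    unfolding vf_seed_def Let_def l_def[symmetric] by (simp add: pr_resp_def level(3))
  also have "\<dots> = ggm (prg Pr) sd0 (l + (D - l)) i"
    by (rule ggm_add[symmetric])
  finally show ?thesis
    using level(2) by (simp add: pr_seed_def)
qed

lemma vf_state_pr_resp:
  assumes "i < 2 ^ D" "ist < 2 ^ D" "i \<noteq> ist"
  shows "vf_state Pr D ist (pr_resp P Pr D sd0 x beta gam eps ist) i = pr_state P Pr D sd0 x beta i"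
  unfolding vf_state_def pr_state_def vf_seed_pr_resp[OF assms]
  using assms by (simp add: pr_resp_def)

lemma vf_leaf_pr_resp:
  assumes "i < 2 ^ D" "ist < 2 ^ D" "i \<noteq> ist"
  shows "vf_leaf Pr D ist (pr_resp P Pr D sd0 x beta gam eps ist) i = pr_leaf P Pr D sd0 x beta i"
  unfolding vf_leaf_def pr_leaf_def vf_state_pr_resp[OF assms] ..

lemma ralpha_pr_resp:
  "ralpha (pr_resp P Pr D sd0 x beta gam eps ist) = alpha_sh P gam eps (ist = 0) (pr_leaf P Pr D sd0 x beta ist)"
  by (simp add: pr_resp_def)

lemma vf_h0_pr_resp:
  assumes "ist < 2 ^ D"
  shows "vf_h0 Pr D ist (pr_resp P Pr D sd0 x beta gam eps ist) = pr_h0 P Pr D sd0 x beta"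
  unfolding vf_h0_def pr_h0_def
proof (intro arg_cong[where f = "hash0 Pr"] map_cong refl)
  fix i
  assume "i \<in> set [0..<2 ^ D]"
  then show "(if i = ist then rcom (pr_resp P Pr D sd0 x beta gam eps ist)
        else com Pr (vf_state Pr D ist (pr_resp P Pr D sd0 x beta gam eps ist) i))
      = com Pr (pr_state P Pr D sd0 x beta i)"
    by (cases "i = ist") (simp add: pr_resp_def, simp add: vf_state_pr_resp[OF _ assms])
qed

context
  fixes P :: "'k::field pub" and e :: nat
  assumes prime_CHAR: "prime CHAR('k)" and qq_CHAR: "qq P = CHAR('k) ^ e"
begin

lemma share_linear_x_sh_frobenius_diff:
  "share_linear (\<lambda>lead s. x_sh P lead s j ^ (qq P ^ i) - x_sh P lead s j)"
proof -
  have "qq P ^ i = CHAR('k) ^ (e * i)"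
    by (simp add: qq_CHAR power_mult)
  then show ?thesis
    by (intro share_linear_diff share_linear_power_CHAR[OF prime_CHAR] share_linear_x_sh)
qed

lemma share_linear_omega_sh: "share_linear (\<lambda>lead s. omega_sh P gam lead s i)"
  unfolding omega_sh_def
  by (intro share_linear_sum share_linear_mult_left share_linear_x_sh_frobenius_diff) simp

lemma share_linear_z_sh: "share_linear (\<lambda>lead s. z_sh P gam lead s)"
  unfolding z_sh_def
  by (intro share_linear_uminus share_linear_sum share_linear_mult_left
      share_linear_x_sh_frobenius_diff) simp

lemma share_linear_alpha_sh: "share_linear (\<lambda>lead s. alpha_sh P gam eps lead s i)"
  unfolding alpha_sh_def
  by (intro share_linear_add share_linear_mult_left share_linear_omega_sh share_linear_sa)

lemma share_linear_v_sh: "share_linear (\<lambda>lead s. v_sh P gam eps al lead s)"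
  unfolding v_sh_def
  by (intro share_linear_diff share_linear_mult_left share_linear_z_sh share_linear_sum
      share_linear_sbt share_linear_sc) simp

lemma vf_alpha_parts_pr_resp:
  assumes ist: "ist < 2 ^ D"
  shows "vf_alpha_parts P Pr D gam eps ist (pr_resp P Pr D sd0 x beta gam eps ist) d b
       = alpha_sh P gam eps (b = 0) (pr_main P Pr D sd0 x beta d b)"
proof
  fix j
  define S where "S = {i. i < 2 ^ D \<and> bit_of d i = b}"
  let ?L = "pr_leaf P Pr D sd0 x beta" and ?R = "pr_resp P Pr D sd0 x beta gam eps ist"
  have "finite S" "(0 \<in> S) = (b = 0)"
    by (auto simp: S_def bit_of_def)
  then have linear: "alpha_sh P gam eps (b = 0) (shr_sum S ?L) j
      = (\<Sum>i\<in>S. alpha_sh P gam eps (i = 0) (?L i) j)"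
    using share_linearD[OF share_linear_alpha_sh, where S = S and f = ?L]
    by simp
  show "vf_alpha_parts P Pr D gam eps ist ?R d b j
      = alpha_sh P gam eps (b = 0) (pr_main P Pr D sd0 x beta d b) j"
  proof (cases "b = bit_of d ist")
    case True
    then have "ist \<in> S"
      using ist by (simp add: S_def)
    have "{i. i < 2 ^ D \<and> bit_of d i = b \<and> i \<noteq> ist} = S - {ist}"
      by (auto simp: S_def)
    then have "vf_alpha_parts P Pr D gam eps ist ?R d b j
        = (\<Sum>i\<in>S - {ist}. alpha_sh P gam eps (i = 0) (vf_leaf Pr D ist ?R i) j) + ralpha ?R j"
      using True by (simp add: vf_alpha_parts_def)
    also have "\<dots> = (\<Sum>i\<in>S - {ist}. alpha_sh P gam eps (i = 0) (?L i) j)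
          + alpha_sh P gam eps (ist = 0) (?L ist) j"
      by (auto simp: S_def vf_leaf_pr_resp[OF _ ist] ralpha_pr_resp intro!: sum.cong)
    also have "\<dots> = alpha_sh P gam eps (b = 0) (shr_sum S ?L) j"
      unfolding linear sum.remove[OF \<open>finite S\<close> \<open>ist \<in> S\<close>] by (simp add: add.commute)
    finally show ?thesis
      by (simp add: pr_main_def S_def)
  next
    case False
    then have "shr_sum S (vf_leaf Pr D ist ?R) = shr_sum S ?L"
      by (intro shr_sum_cong vf_leaf_pr_resp[OF _ ist]) (auto simp: S_def)
    then show ?thesis
      using False by (simp add: vf_alpha_parts_def pr_main_def S_def)
  qed
qed

lemma vf_alpha_pr_resp:
  assumes "ist < 2 ^ D"
  shows "vf_alpha P Pr D gam eps ist (pr_resp P Pr D sd0 x beta gam eps ist) d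
       = alpha_sh P gam eps True (shr_sum {..<2 ^ D} (pr_leaf P Pr D sd0 x beta))"
  unfolding vf_alpha_def vf_alpha_parts_pr_resp[OF assms] pr_main_def
  using share_linear_main_parties[OF share_linear_alpha_sh] by simp

lemma vf_Hd_pr_resp:
  fixes Pr :: "('sd, 'k, 'cm, 'h, 'h1) prims" and D :: nat and sd0 :: 'sd and x beta :: "nat \<Rightarrow> 'k"
  defines "T \<equiv> shr_sum {..<2 ^ D} (pr_leaf P Pr D sd0 x beta)"
  assumes ist: "ist < 2 ^ D"
    and check: "v_sh P gam eps (alpha_sh P gam eps True T) True T = 0"
  shows "vf_Hd P Pr D gam eps ist (pr_resp P Pr D sd0 x beta gam eps ist) d
       = pr_Hd P Pr D sd0 x beta gam eps d"
proof -
  let ?R = "pr_resp P Pr D sd0 x beta gam eps ist" and ?main = "pr_main P Pr D sd0 x beta d"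
  define al where "al = alpha_sh P gam eps True T"
  have alpha: "(\<lambda>i. alpha_sh P gam eps True (?main 0) i + alpha_sh P gam eps False (?main 1) i) = al"
    using share_linear_main_parties[OF share_linear_alpha_sh]
    by (simp add: al_def T_def pr_main_def)
  have v: "v_sh P gam eps al True (?main 0) + v_sh P gam eps al False (?main 1) = 0"
    using share_linear_main_parties[OF share_linear_v_sh] check
    by (simp add: al_def T_def pr_main_def)
  have "n mod 2 \<noteq> 1 - n mod 2" for n :: nat
    by presburger
  then have "bit_of d i \<noteq> 1 - bit_of d i" for i
    unfolding bit_of_def .
  then have other: "shr_sum {i. i < 2 ^ D \<and> bit_of d i = 1 - bit_of d ist} (vf_leaf Pr D ist ?R)
      = ?main (1 - bit_of d ist)"
    unfolding pr_main_def
    by (intro shr_sum_cong vf_leaf_pr_resp[OF _ ist]) auto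
  have vf_alpha: "vf_alpha P Pr D gam eps ist ?R d = al"
    unfolding vf_alpha_pr_resp[OF ist] al_def T_def ..
  have "bit_of d ist = 0 \<or> bit_of d ist = 1"
    by (auto simp: bit_of_def)
  then show ?thesis
  proof
    assume "bit_of d ist = 0"
    moreover have "v_sh P gam eps al True (?main 0) = - v_sh P gam eps al False (?main 1)"
      using v by (simp add: eq_neg_iff_add_eq_0)
    ultimately show ?thesis
      using other alpha
      by (simp add: vf_Hd_def pr_Hd_def Let_def vf_alpha vf_alpha_parts_pr_resp[OF ist])
  next
    assume "bit_of d ist = 1"
    moreover have "v_sh P gam eps al False (?main 1) = - v_sh P gam eps al True (?main 0)"
      using v by (simp add: eq_neg_iff_add_eq_0 add.commute)
    ultimately show ?thesis
      using other alpha
      by (simp add: vf_Hd_def pr_Hd_def Let_def vf_alpha vf_alpha_parts_pr_resp[OF ist])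
  qed
qed

lemma honest_accepts_if_v_sh_eq_0:
  fixes Pr :: "('sd, 'k, 'cm, 'h, 'h1) prims" and D :: nat and sd0 :: 'sd and x beta :: "nat \<Rightarrow> 'k"
  defines "T \<equiv> shr_sum {..<2 ^ D} (pr_leaf P Pr D sd0 x beta)"
  assumes ist: "ist < 2 ^ D"
    and check: "v_sh P gam eps (alpha_sh P gam eps True T) True T = 0"
  shows "honest_accepts P Pr D x beta sd0 gam eps ist"
proof -
  have "vf_Hd P Pr D gam eps ist (pr_resp P Pr D sd0 x beta gam eps ist) = pr_Hd P Pr D sd0 x beta gam eps"
    by (rule ext) (rule vf_Hd_pr_resp[OF ist check[unfolded T_def]])
  then show ?thesis
    by (simp add: honest_accepts_def verifier_accepts_def pr_h1_def vf_h0_pr_resp[OF ist]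
        vf_alpha_pr_resp[OF ist])
qed

end

lemma shr_sum_pr_leaf:
  "shr_sum {..<2 ^ D} (pr_leaf P Pr D sd0 x beta)
     = \<lparr>sxb = (\<lambda>j. x (nn P - kk P + j)), sbt = beta, sa = pr_a Pr D sd0, sc = pr_c P Pr D sd0 beta\<rparr>"
proof -
  define M where "M = 2 ^ D - Suc 0"
  let ?E = "\<lambda>i. expand Pr (pr_seed Pr D sd0 i)"
  have split: "(\<Sum>i<2 ^ D. h i) = h M + (\<Sum>i<M. h i)" for h :: "nat \<Rightarrow> 'a"
  proof -
    have "{..<2 ^ D} = insert M {..<M}"
      by (auto simp: M_def)
    then show ?thesis
      by simp
  qed
  have leaf: "pr_leaf P Pr D sd0 x beta i = ?E i" if "i < M" for i
    using that by (simp add: pr_leaf_def pr_state_def leaf_sh_def M_def)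
  have last: "pr_leaf P Pr D sd0 x beta M
      = (?E M)\<lparr>sxb := sxb (pr_aux P Pr D sd0 x beta), sbt := sbt (pr_aux P Pr D sd0 x beta),
                sc := sc (pr_aux P Pr D sd0 x beta)\<rparr>"
    by (simp add: pr_leaf_def pr_state_def leaf_sh_def M_def)
  show ?thesis
    by (simp add: shr_sum_def split last leaf pr_aux_def pr_a_def fun_eq_iff flip: M_def)
qed

lemma x_sh_True_eq_witness:
  assumes "sxb s = (\<lambda>j. x (nn P - kk P + j))"
    and "\<forall>i<nn P - kk P. x i + (\<Sum>j<kk P. Hp P i j * x (nn P - kk P + j)) = yv P i"
  shows "x_sh P True s j = x j"
proof (cases "j < nn P - kk P")
  case True
  then have "yv P j - (\<Sum>j'<kk P. Hp P j j' * x (nn P - kk P + j')) = x j"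
    using assms(2) by (simp add: diff_eq_eq)
  then show ?thesis
    using True by (simp add: x_sh_def xA_sh_def assms(1))
qed (simp add: x_sh_def assms(1))

lemma v_sh_alpha_sh_eq_0:
  fixes P :: "'k::field pub"
  assumes x_eq: "\<And>j. j < nn P \<Longrightarrow> x_sh P True s j = x j"
    and beta: "sbt s = beta" and c: "sc s = - (\<Sum>i\<in>{1..<rr P}. beta i * sa s i)"
    and roots: "\<And>j. j < nn P \<Longrightarrow>
      x j ^ (qq P ^ rr P) - x j + (\<Sum>i\<in>{1..<rr P}. beta i * (x j ^ (qq P ^ i) - x j)) = 0"
  shows "v_sh P gam eps (alpha_sh P gam eps True s) True s = 0"
proof -
  let ?I = "{1..<rr P}"
  define frob where "frob = (\<lambda>Q (y :: 'k). y ^ Q - y)"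
  have z: "z_sh P gam True s = - (\<Sum>j<nn P. gam j * frob (qq P ^ rr P) (x j))"
    by (simp add: z_sh_def x_eq frob_def)
  have omega: "omega_sh P gam True s i = (\<Sum>j<nn P. gam j * frob (qq P ^ i) (x j))" for i
    by (simp add: omega_sh_def x_eq frob_def)
  have "v_sh P gam eps (alpha_sh P gam eps True s) True s
      = eps * (z_sh P gam True s - (\<Sum>i\<in>?I. beta i * omega_sh P gam True s i))"
    by (simp add: v_sh_def alpha_sh_def beta c algebra_simps sum.distrib sum_distrib_left)
  also have "\<dots> = - eps * (\<Sum>j<nn P. gam j
        * (frob (qq P ^ rr P) (x j) + (\<Sum>i\<in>?I. beta i * frob (qq P ^ i) (x j))))"
  proof -
    have "(\<Sum>i\<in>?I. beta i * omega_sh P gam True s i)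
        = (\<Sum>j<nn P. gam j * (\<Sum>i\<in>?I. beta i * frob (qq P ^ i) (x j)))"
      unfolding omega by (simp add: sum_distrib_left mult_ac, rule sum.swap)
    then show ?thesis
      unfolding z by (simp add: distrib_left sum.distrib sum_negf algebra_simps)
  qed
  also have "\<dots> = 0"
    using roots by (simp add: frob_def sum.neutral)
  finally show ?thesis .
qed

lemma annihilator_root:
  fixes U :: "'a::field set"
  assumes "finite U" "u \<in> U"
    and "(\<Prod>u\<in>U. [:- u, 1:])
           = monom 1 N - [:0, 1:] + (\<Sum>i\<in>I. smult (beta i) (monom 1 (M i) - [:0, 1:]))"
  shows "u ^ N - u + (\<Sum>i\<in>I. beta i * (u ^ M i - u)) = 0"
proof -
  have "poly (\<Prod>u\<in>U. [:- u, 1:]) u = 0"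
    using assms(1,2) by (simp add: poly_prod prod_zero_iff)
  then show ?thesis
    by (simp add: assms(3) poly_sum poly_monom)
qed

lemma fq_span_base: "t \<in> S \<Longrightarrow> t \<in> fq_span q S"
  unfolding fq_span_def subfield_of_def
  by (intro CollectI exI[of _ "{t}"] exI[of _ "\<lambda>_. 1"]) simp

theorem theorem1:
  fixes P :: "('k::{field,finite}) pub"
    and Pr :: "('sd, 'k, 'cm, 'h, 'h1) prims"
    and p e m eta D :: nat
    and x beta :: "nat \<Rightarrow> 'k"
  assumes "prime p" and "e > 0" and "qq P = p ^ e"
    and "m > 0" and "eta > 0" and "nn P > 0" and "kk P > 0" and "kk P \<le> nn P"
    and "rr P > 0" and "D > 0"
    and "card (UNIV :: 'k set) = qq P ^ (m * eta)" and "CHAR('k) = p"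
    \<comment> \<open>the instance lies in F_{q^m}\<close>
    and "\<forall>i<nn P - kk P. \<forall>j<kk P. Hp P i j \<in> subfield_of (qq P ^ m)"
    and "\<forall>i<nn P - kk P. yv P i \<in> subfield_of (qq P ^ m)"
    \<comment> \<open>the witness: x in F_{q^m}^n, Hx = y, rank weight at most r\<close>
    and "\<forall>j<nn P. x j \<in> subfield_of (qq P ^ m)"
    and "\<forall>i<nn P - kk P. x i + (\<Sum>j<kk P. Hp P i j * x (nn P - kk P + j)) = yv P i"
    and "rank_weight (qq P) (nn P) x \<le> rr P"
    \<comment> \<open>standing assumption on U, and beta = coefficients of the annihilator polynomial of U\<close>
    and "1 \<in> fq_span (qq P) (x ` {..<nn P})"
    and "fq_dim (qq P) (fq_span (qq P) (x ` {..<nn P})) = rr P"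
    and "(\<Prod>u\<in>fq_span (qq P) (x ` {..<nn P}). [:- u, 1:])
           = (monom 1 (qq P ^ rr P) - [:0, 1:])
             + (\<Sum>i\<in>{1..<rr P}. smult (beta i) (monom 1 (qq P ^ i) - [:0, 1:]))"
    \<comment> \<open>leaf shares of x_B and beta derived from seeds lie in F_{q^m}\<close>
    and "\<forall>s j. sxb (expand Pr s) j \<in> subfield_of (qq P ^ m)
              \<and> sbt (expand Pr s) j \<in> subfield_of (qq P ^ m)"
  shows "\<forall>sd0 gam eps ist. ist < 2 ^ D \<longrightarrow>
           honest_accepts P Pr D x beta sd0 gam eps ist"
proof (intro allI impI)
  fix sd0 gam eps ist
  assume ist: "ist < (2::nat) ^ D"
  define U where "U = fq_span (qq P) (x ` {..<nn P})"
  define T where "T = shr_sum {..<2 ^ D} (pr_leaf P Pr D sd0 x beta)"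
  have T: "T = \<lparr>sxb = (\<lambda>j. x (nn P - kk P + j)), sbt = beta, sa = pr_a Pr D sd0,
                sc = pr_c P Pr D sd0 beta\<rparr>"
    unfolding T_def by (rule shr_sum_pr_leaf)
  have "x j ^ (qq P ^ rr P) - x j + (\<Sum>i\<in>{1..<rr P}. beta i * (x j ^ (qq P ^ i) - x j)) = 0"
    if "j < nn P" for j
    by (rule annihilator_root[of U]) (use that assms(20) in \<open>simp_all add: U_def fq_span_base\<close>)
  then have check: "v_sh P gam eps (alpha_sh P gam eps True T) True T = 0"
    using assms(16) by (intro v_sh_alpha_sh_eq_0) (simp_all add: T x_sh_True_eq_witness pr_c_def)
  have "prime CHAR('k)" "qq P = CHAR('k) ^ e"
    using assms(1,3,12) by simp_all
  from honest_accepts_if_v_sh_eq_0[OF this ist] check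
  show "honest_accepts P Pr D x beta sd0 gam eps ist"
    unfolding T_def .
qed

end
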